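(* Let $O$ be a unitary operator and $P$ a self-adjoint orthogonal projection on a finite-dimensional Hilbert space such that $(\mathrm{Id}-P)O=\mathrm{Id}-P$. Then for any vector $\varphi$ and any density matrix $\sigma$, $$\left|\langle\varphi,(O\sigma O^\dagger-\sigma)\varphi\rangle\right|\leq 2\lVert P\varphi\rVert\,\lVert\varphi\rVert\left(\mathrm{tr}\bigl((O\sigma O^\dagger-\sigma)^2\bigr)\right)^{1/2}.$$ *)

theory Defs
  imports "Jordan_Normal_Form.Schur_Decomposition"
begin

text \<open>Finite-dimensional Hilbert space = complex column vectors of dimension n.
  Inner product is antilinear in the first argument (physics convention).\<close>

definition hinner :: "complex vec \<Rightarrow> complex vec \<Rightarrow> complex" where
  "hinner v w = w \<bullet>c v"

definition hnorm :: "complex vec \<Rightarrow> real" where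
  "hnorm v = sqrt (Re (hinner v v))"

definition mtrace :: "complex mat \<Rightarrow> complex" where
  "mtrace A = (\<Sum>i<dim_row A. A $$ (i, i))"

definition unitary_mat :: "nat \<Rightarrow> complex mat \<Rightarrow> bool" where
  "unitary_mat n U \<longleftrightarrow> U \<in> carrier_mat n n \<and>
     U * mat_adjoint U = 1\<^sub>m n \<and> mat_adjoint U * U = 1\<^sub>m n"

definition orth_projection :: "nat \<Rightarrow> complex mat \<Rightarrow> bool" where
  "orth_projection n P \<longleftrightarrow> P \<in> carrier_mat n n \<and>
     mat_adjoint P = P \<and> P * P = P"

definition density_matrix :: "nat \<Rightarrow> complex mat \<Rightarrow> bool" where
  "density_matrix n S \<longleftrightarrow> S \<in> carrier_mat n n \<and> mat_adjoint S = S \<and>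
     (\<forall>v \<in> carrier_vec n. Im (hinner v (S *\<^sub>v v)) = 0 \<and> Re (hinner v (S *\<^sub>v v)) \<ge> 0) \<and>
     mtrace S = 1"

end

(* Write D = U sigma U* - sigma, p = P phi and q = (1 - P) phi. Taking adjoints in
   (1 - P) U = 1 - P gives U* q = q, hence <q, D q> = <U* q, sigma U* q> - <q, sigma q> = 0
   and <phi, D phi> = <p, D phi> + <q, D p>. Cauchy-Schwarz, the bound |D x| <= |D|_F |x|
   by the Frobenius norm, |q| <= |phi|, and |D|_F^2 = tr (D^2) for the Hermitian D finish
   the estimate. *)
theory Submission
  imports Defs "HOL-Analysis.L2_Norm"
begin

lemma dim_row_mat_adjoint [simp]: "dim_row (mat_adjoint A) = dim_col A"
  and dim_col_mat_adjoint [simp]: "dim_col (mat_adjoint A) = dim_row A"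
  unfolding mat_adjoint_def by auto

lemma mat_adjoint_carrier_mat: "A \<in> carrier_mat n m \<Longrightarrow> mat_adjoint A \<in> carrier_mat m n"
  by auto

lemma index_mat_adjoint [simp]:
  "i < dim_col A \<Longrightarrow> j < dim_row A \<Longrightarrow> mat_adjoint A $$ (i, j) = cnj (A $$ (j, i))"
  unfolding mat_adjoint_def by (auto simp: mat_of_rows_def)

lemma mat_adjoint_adjoint [simp]: "mat_adjoint (mat_adjoint A) = (A :: complex mat)"
  by (rule eq_matI) auto

lemma mat_adjoint_one [simp]: "mat_adjoint (1\<^sub>m n) = (1\<^sub>m n :: complex mat)"
  by (rule eq_matI) auto

lemma mat_adjoint_minus:
  "A \<in> carrier_mat n m \<Longrightarrow> B \<in> carrier_mat n m \<Longrightarrow>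
   mat_adjoint (A - B) = mat_adjoint A - (mat_adjoint B :: complex mat)"
  by (rule eq_matI) auto

lemma mat_adjoint_mult:
  fixes A B :: "complex mat"
  assumes "dim_col A = dim_row B"
  shows "mat_adjoint (A * B) = mat_adjoint B * mat_adjoint A"
  using assms
  by (intro eq_matI) (auto simp: scalar_prod_def mult.commute intro!: sum.cong)

lemma hinner_eq_sum:
  "v \<in> carrier_vec n \<Longrightarrow> w \<in> carrier_vec n \<Longrightarrow> hinner v w = (\<Sum>i<n. cnj (v $ i) * w $ i)"
  unfolding hinner_def scalar_prod_def by (auto simp: lessThan_atLeast0 mult.commute)

lemma hinner_add_left:
  "u \<in> carrier_vec n \<Longrightarrow> v \<in> carrier_vec n \<Longrightarrow> w \<in> carrier_vec n \<Longrightarrow>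
   hinner (u + v) w = hinner u w + hinner v w"
  by (simp add: hinner_eq_sum[of _ n] sum.distrib distrib_right)

lemma hinner_add_right:
  "u \<in> carrier_vec n \<Longrightarrow> v \<in> carrier_vec n \<Longrightarrow> w \<in> carrier_vec n \<Longrightarrow>
   hinner u (v + w) = hinner u v + hinner u w"
  by (simp add: hinner_eq_sum[of _ n] sum.distrib distrib_left)

lemma hinner_diff_left:
  "u \<in> carrier_vec n \<Longrightarrow> v \<in> carrier_vec n \<Longrightarrow> w \<in> carrier_vec n \<Longrightarrow>
   hinner (u - v) w = hinner u w - hinner v w"
  by (simp add: hinner_eq_sum[of _ n] sum_subtractf left_diff_distrib)

lemma hinner_diff_right:
  "u \<in> carrier_vec n \<Longrightarrow> v \<in> carrier_vec n \<Longrightarrow> w \<in> carrier_vec n \<Longrightarrow>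
   hinner u (v - w) = hinner u v - hinner u w"
  by (simp add: hinner_eq_sum[of _ n] sum_subtractf right_diff_distrib)

lemma hinner_mult_mat_vec_right:
  assumes "A \<in> carrier_mat n m" "u \<in> carrier_vec n" "v \<in> carrier_vec m"
  shows "hinner u (A *\<^sub>v v) = hinner (mat_adjoint A *\<^sub>v u) v"
proof -
  have "hinner u (A *\<^sub>v v) = (\<Sum>i<n. \<Sum>j<m. cnj (u $ i) * (A $$ (i, j) * v $ j))"
    using assms by (auto simp: hinner_eq_sum[of _ n] scalar_prod_def sum_distrib_left lessThan_atLeast0)
  also have "\<dots> = (\<Sum>j<m. \<Sum>i<n. cnj (u $ i) * (A $$ (i, j) * v $ j))"
    by (rule sum.swap)
  also have "\<dots> = hinner (mat_adjoint A *\<^sub>v u) v"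
  proof -
    have "mat_adjoint A *\<^sub>v u \<in> carrier_vec m"
      using assms by (metis mult_mat_vec_carrier mat_adjoint_carrier_mat)
    then show ?thesis
      using assms by (auto simp: hinner_eq_sum[of _ m] scalar_prod_def sum_distrib_left
          lessThan_atLeast0 mult_ac intro!: sum.cong)
  qed
  finally show ?thesis .
qed

lemma Re_hinner_self:
  assumes "v \<in> carrier_vec n"
  shows "Re (hinner v v) = (\<Sum>i<n. (cmod (v $ i))\<^sup>2)"
proof -
  have "hinner v v = (\<Sum>i<n. of_real ((cmod (v $ i))\<^sup>2))"
    unfolding hinner_eq_sum[OF assms assms]
    by (intro sum.cong refl) (metis complex_norm_square mult.commute)
  then show ?thesis
    by (simp only: Re_sum Re_complex_of_real)
qed

lemma hnorm_eq_L2_set: "v \<in> carrier_vec n \<Longrightarrow> hnorm v = L2_set (\<lambda>i. cmod (v $ i)) {..<n}"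
  unfolding hnorm_def L2_set_def by (simp add: Re_hinner_self)

lemma hnorm_nonneg: "0 \<le> hnorm v"
  using hnorm_eq_L2_set[OF carrier_vec_dim_vec] by (simp add: L2_set_nonneg)

lemma power2_hnorm: "(hnorm v)\<^sup>2 = Re (hinner v v)"
  using Re_hinner_self[OF carrier_vec_dim_vec, of v]
  by (simp add: hnorm_def sum_nonneg)

lemma hinner_Cauchy_Schwarz:
  assumes "v \<in> carrier_vec n" "w \<in> carrier_vec n"
  shows "cmod (hinner v w) \<le> hnorm v * hnorm w"
proof -
  have "cmod (hinner v w) \<le> (\<Sum>i<n. \<bar>cmod (v $ i)\<bar> * \<bar>cmod (w $ i)\<bar>)"
    unfolding hinner_eq_sum[OF assms] by (rule order_trans[OF norm_sum]) (simp add: norm_mult)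
  also have "\<dots> \<le> L2_set (\<lambda>i. cmod (v $ i)) {..<n} * L2_set (\<lambda>i. cmod (w $ i)) {..<n}"
    by (rule L2_set_mult_ineq)
  finally show ?thesis
    using assms by (simp add: hnorm_eq_L2_set)
qed

definition frobenius_norm :: "complex mat \<Rightarrow> real" where
  "frobenius_norm A = sqrt (\<Sum>i<dim_row A. \<Sum>j<dim_col A. (cmod (A $$ (i, j)))\<^sup>2)"

lemma frobenius_norm_nonneg: "0 \<le> frobenius_norm A"
  unfolding frobenius_norm_def by (simp add: sum_nonneg)

lemma hnorm_mult_mat_vec_le:
  assumes A: "A \<in> carrier_mat n m" and v: "v \<in> carrier_vec m"
  shows "hnorm (A *\<^sub>v v) \<le> frobenius_norm A * hnorm v"
proof -
  have row: "(cmod ((A *\<^sub>v v) $ i))\<^sup>2 \<le> (\<Sum>j<m. (cmod (A $$ (i, j)))\<^sup>2) * (hnorm v)\<^sup>2"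
    if i: "i < n" for i
  proof -
    have "cmod ((A *\<^sub>v v) $ i) \<le> (\<Sum>j<m. \<bar>cmod (A $$ (i, j))\<bar> * \<bar>cmod (v $ j)\<bar>)"
      using A v i by (auto simp: scalar_prod_def lessThan_atLeast0 norm_mult intro: order_trans[OF norm_sum])
    also have "\<dots> \<le> L2_set (\<lambda>j. cmod (A $$ (i, j))) {..<m} * hnorm v"
      unfolding hnorm_eq_L2_set[OF v] by (rule L2_set_mult_ineq)
    finally have "(cmod ((A *\<^sub>v v) $ i))\<^sup>2 \<le> (L2_set (\<lambda>j. cmod (A $$ (i, j))) {..<m} * hnorm v)\<^sup>2"
      by (simp add: power_mono)
    then show ?thesis
      by (simp add: power_mult_distrib L2_set_def sum_nonneg)
  qed
  have "(hnorm (A *\<^sub>v v))\<^sup>2 = (\<Sum>i<n. (cmod ((A *\<^sub>v v) $ i))\<^sup>2)"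
    using A v by (simp add: power2_hnorm Re_hinner_self[of _ n])
  also have "\<dots> \<le> (\<Sum>i<n. (\<Sum>j<m. (cmod (A $$ (i, j)))\<^sup>2) * (hnorm v)\<^sup>2)"
    using row by (intro sum_mono) simp
  also have "\<dots> = (frobenius_norm A * hnorm v)\<^sup>2"
    using A by (simp add: frobenius_norm_def power_mult_distrib sum_distrib_right sum_nonneg)
  finally show ?thesis
    by (rule power2_le_imp_le) (simp add: frobenius_norm_nonneg hnorm_nonneg)
qed

lemma mtrace_mult_mat_adjoint: "mtrace (A * mat_adjoint A) = of_real ((frobenius_norm A)\<^sup>2)"
proof -
  have "(A * mat_adjoint A) $$ (i, i) = (\<Sum>j<dim_col A. of_real ((cmod (A $$ (i, j)))\<^sup>2))"
    if "i < dim_row A" for i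
    using that by (auto simp: scalar_prod_def lessThan_atLeast0 complex_norm_square simp del: of_real_power
        intro!: sum.cong)
  then show ?thesis
    by (simp add: mtrace_def frobenius_norm_def sum_nonneg)
qed

lemma frobenius_norm_hermitian:
  "mat_adjoint D = D \<Longrightarrow> frobenius_norm D = sqrt (Re (mtrace (D * D)))"
  using mtrace_mult_mat_adjoint[of D] by (simp add: frobenius_norm_nonneg)

lemma hnorm_complement_orth_projection_le:
  assumes P: "orth_projection n P" and v: "v \<in> carrier_vec n"
  shows "hnorm ((1\<^sub>m n - P) *\<^sub>v v) \<le> hnorm v"
proof -
  have P_carrier: "P \<in> carrier_mat n n" and "mat_adjoint P = P" "P * P = P"
    using P unfolding orth_projection_def by auto
  define q where "q = v - P *\<^sub>v v"
  have q: "q \<in> carrier_vec n"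
    using P_carrier v unfolding q_def by simp
  have q_eq: "(1\<^sub>m n - P) *\<^sub>v v = q"
    using P_carrier v unfolding q_def by (simp add: minus_mult_distrib_mat_vec[of _ n n])
  have "hinner (P *\<^sub>v v) q = hinner v (P *\<^sub>v q)"
    using P_carrier v q \<open>mat_adjoint P = P\<close> by (simp add: hinner_mult_mat_vec_right)
  also have "P *\<^sub>v q = 0\<^sub>v n"
    using P_carrier v \<open>P * P = P\<close> unfolding q_def
    by (simp add: mult_minus_distrib_mat_vec[of _ n n] assoc_mult_mat_vec[of P n n P n, symmetric])
  finally have orthogonal: "hinner (P *\<^sub>v v) q = 0"
    using v by (simp add: hinner_eq_sum[of _ n])
  have "hinner q q = hinner v q - hinner (P *\<^sub>v v) q"
    using P_carrier v q unfolding q_def by (simp add: hinner_diff_left[of _ n])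
  then have "(hnorm q)\<^sup>2 = Re (hinner v q)"
    using orthogonal by (simp add: power2_hnorm)
  also have "\<dots> \<le> hnorm v * hnorm q"
    using hinner_Cauchy_Schwarz[OF v q] complex_Re_le_cmod[of "hinner v q"] by linarith
  finally have "hnorm q * hnorm q \<le> hnorm v * hnorm q"
    by (simp add: power2_eq_square)
  then show ?thesis
    unfolding q_eq using hnorm_nonneg[of q] hnorm_nonneg[of v]
    by (cases "hnorm q = 0") (auto intro: mult_right_le_imp_le)
qed

lemma mat_adjoint_fixes_complement_range:
  assumes P: "orth_projection n P" and U: "U \<in> carrier_mat n n"
    and fixed: "(1\<^sub>m n - P) * U = 1\<^sub>m n - P" and v: "v \<in> carrier_vec n"
  shows "mat_adjoint U *\<^sub>v ((1\<^sub>m n - P) *\<^sub>v v) = (1\<^sub>m n - P) *\<^sub>v v"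
proof -
  have "P \<in> carrier_mat n n" "mat_adjoint P = P"
    using P unfolding orth_projection_def by simp_all
  then have Q: "1\<^sub>m n - P \<in> carrier_mat n n" "mat_adjoint (1\<^sub>m n - P) = 1\<^sub>m n - P"
    by (simp_all add: minus_carrier_mat mat_adjoint_minus[of _ n n])
  have "mat_adjoint ((1\<^sub>m n - P) * U) = mat_adjoint U * mat_adjoint (1\<^sub>m n - P)"
    by (rule mat_adjoint_mult) (use U Q(1) in auto)
  then have "mat_adjoint U * (1\<^sub>m n - P) = 1\<^sub>m n - P"
    unfolding fixed Q(2) ..
  then show ?thesis
    using assoc_mult_mat_vec[OF mat_adjoint_carrier_mat[OF U] Q(1) v] by simp
qed

lemma mat_adjoint_conjugation_diff:
  fixes U S :: "complex mat"
  assumes U: "U \<in> carrier_mat n n" and S: "S \<in> carrier_mat n n" and "mat_adjoint S = S"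
  shows "mat_adjoint (U * S * mat_adjoint U - S) = U * S * mat_adjoint U - S"
proof -
  have U': "mat_adjoint U \<in> carrier_mat n n"
    using U by (rule mat_adjoint_carrier_mat)
  have US: "U * S \<in> carrier_mat n n"
    using U S by (rule mult_carrier_mat)
  have "mat_adjoint (U * S * mat_adjoint U) = mat_adjoint (mat_adjoint U) * mat_adjoint (U * S)"
    by (rule mat_adjoint_mult) (use U S in simp)
  also have "\<dots> = U * (S * mat_adjoint U)"
    using U S \<open>mat_adjoint S = S\<close> by (simp add: mat_adjoint_mult)
  also have "\<dots> = U * S * mat_adjoint U"
    by (rule assoc_mult_mat[symmetric, OF U S U'])
  finally show ?thesis
    using mat_adjoint_minus[OF mult_carrier_mat[OF US U'] S] \<open>mat_adjoint S = S\<close> by simp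
qed

lemma hinner_conjugation_diff_eq_0:
  assumes U: "U \<in> carrier_mat n n" and S: "S \<in> carrier_mat n n" and v: "v \<in> carrier_vec n"
    and fixed: "mat_adjoint U *\<^sub>v v = v"
  shows "hinner v ((U * S * mat_adjoint U - S) *\<^sub>v v) = 0"
proof -
  have U': "mat_adjoint U \<in> carrier_mat n n"
    using U by (rule mat_adjoint_carrier_mat)
  have US: "U * S \<in> carrier_mat n n"
    using U S by (rule mult_carrier_mat)
  have "(U * S * mat_adjoint U) *\<^sub>v v = (U * S) *\<^sub>v (mat_adjoint U *\<^sub>v v)"
    by (rule assoc_mult_mat_vec[OF US U' v])
  also have "\<dots> = U *\<^sub>v (S *\<^sub>v v)"
    unfolding fixed by (rule assoc_mult_mat_vec[OF U S v])
  finally have "(U * S * mat_adjoint U - S) *\<^sub>v v = U *\<^sub>v (S *\<^sub>v v) - S *\<^sub>v v"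
    using minus_mult_distrib_mat_vec[OF mult_carrier_mat[OF US U'] S v] by simp
  moreover have "hinner v (U *\<^sub>v (S *\<^sub>v v)) = hinner (mat_adjoint U *\<^sub>v v) (S *\<^sub>v v)"
    using U S v by (simp add: hinner_mult_mat_vec_right)
  moreover have "S *\<^sub>v v \<in> carrier_vec n" "U *\<^sub>v (S *\<^sub>v v) \<in> carrier_vec n"
    using U S v by simp_all
  ultimately show ?thesis
    using v fixed by (simp add: hinner_diff_right[of _ n])
qed

lemma cmod_hinner_quadratic_le_if_null:
  assumes D: "D \<in> carrier_mat n n" and p: "p \<in> carrier_vec n" and q: "q \<in> carrier_vec n"
    and q_null: "hinner q (D *\<^sub>v q) = 0" and q_le: "hnorm q \<le> hnorm (p + q)"
  shows "cmod (hinner (p + q) (D *\<^sub>v (p + q))) \<le> 2 * hnorm p * hnorm (p + q) * frobenius_norm D"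
proof -
  let ?v = "p + q"
  have v: "?v \<in> carrier_vec n"
    using p q by simp
  have "hinner ?v (D *\<^sub>v ?v) = hinner p (D *\<^sub>v ?v) + hinner q (D *\<^sub>v p)"
    using D p q q_null by (simp add: hinner_add_left[of _ n] hinner_add_right[of _ n]
        mult_add_distrib_mat_vec[OF D])
  then have "cmod (hinner ?v (D *\<^sub>v ?v)) \<le> cmod (hinner p (D *\<^sub>v ?v)) + cmod (hinner q (D *\<^sub>v p))"
    by (simp add: norm_triangle_ineq)
  also have "\<dots> \<le> hnorm p * hnorm (D *\<^sub>v ?v) + hnorm q * hnorm (D *\<^sub>v p)"
    using D p q v by (intro add_mono hinner_Cauchy_Schwarz[of _ n]) auto
  also have "\<dots> \<le> hnorm p * (frobenius_norm D * hnorm ?v) + hnorm ?v * (frobenius_norm D * hnorm p)"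
    using hnorm_mult_mat_vec_le[OF D v] hnorm_mult_mat_vec_le[OF D p] q_le
    by (intro add_mono mult_mono) (simp_all add: hnorm_nonneg frobenius_norm_nonneg)
  finally show ?thesis
    by (simp add: algebra_simps)
qed

theorem lemma3:
  fixes n :: nat and U P \<sigma> :: "complex mat" and \<phi> :: "complex vec"
  assumes "unitary_mat n U"
    and "orth_projection n P"
    and "(1\<^sub>m n - P) * U = 1\<^sub>m n - P"
    and "\<phi> \<in> carrier_vec n"
    and "density_matrix n \<sigma>"
  shows "cmod (hinner \<phi> ((U * \<sigma> * mat_adjoint U - \<sigma>) *\<^sub>v \<phi>))
    \<le> 2 * hnorm (P *\<^sub>v \<phi>) * hnorm \<phi> *
       sqrt (Re (mtrace ((U * \<sigma> * mat_adjoint U - \<sigma>) * (U * \<sigma> * mat_adjoint U - \<sigma>))))"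
proof -
  have U: "U \<in> carrier_mat n n"
    using assms(1) unfolding unitary_mat_def by simp
  have P: "P \<in> carrier_mat n n"
    using assms(2) unfolding orth_projection_def by simp
  have \<sigma>: "\<sigma> \<in> carrier_mat n n" "mat_adjoint \<sigma> = \<sigma>"
    using assms(5) unfolding density_matrix_def by simp_all
  define D where "D = U * \<sigma> * mat_adjoint U - \<sigma>"
  define q where "q = (1\<^sub>m n - P) *\<^sub>v \<phi>"
  have D: "D \<in> carrier_mat n n"
    using U \<sigma> unfolding D_def by auto
  have p: "P *\<^sub>v \<phi> \<in> carrier_vec n"
    using P assms(4) by simp
  have q: "q \<in> carrier_vec n"
    unfolding q_def by (rule mult_mat_vec_carrier[OF minus_carrier_mat[OF P] assms(4)])
  have \<phi>_split: "\<phi> = P *\<^sub>v \<phi> + q"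
    using P assms(4) unfolding q_def by (intro eq_vecI) (simp_all add: minus_mult_distrib_mat_vec[of _ n n])
  have "mat_adjoint U *\<^sub>v q = q"
    unfolding q_def using assms(2) U assms(3,4) by (rule mat_adjoint_fixes_complement_range)
  with U \<sigma>(1) q have q_null: "hinner q (D *\<^sub>v q) = 0"
    unfolding D_def by (rule hinner_conjugation_diff_eq_0)
  have q_le: "hnorm q \<le> hnorm \<phi>"
    unfolding q_def using assms(2,4) by (rule hnorm_complement_orth_projection_le)
  have "cmod (hinner \<phi> (D *\<^sub>v \<phi>)) \<le> 2 * hnorm (P *\<^sub>v \<phi>) * hnorm \<phi> * frobenius_norm D"
    using cmod_hinner_quadratic_le_if_null[OF D p q q_null, folded \<phi>_split, OF q_le] .
  moreover have "mat_adjoint D = D"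
    unfolding D_def using U \<sigma> by (rule mat_adjoint_conjugation_diff)
  ultimately show ?thesis
    unfolding D_def[symmetric] by (simp add: frobenius_norm_hermitian)
qed

end
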